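(* Let $\eta\in(0,1)$ and $N_S>0$, and for $\xi\in[0,1]$ let $$I(\xi;N_S)=4N_S\left\{\frac{1-\xi}{1-2\eta^2\left(\sqrt{\xi N_S(1+\xi N_S)}-\xi N_S\right)}+\frac{\xi\left[(1-\eta^2)^2+\eta^4\right]}{(1-\eta^2)\left(1+2\xi N_S\eta^2(1-\eta^2)\right)}\right\}.$$ Then $\xi=0$ is not a maximizer of $\xi\mapsto I(\xi;N_S)$ over $[0,1]$.
   Context: $I(\xi;N_S)$ is the quantum Fisher information for estimating the transmission $\eta$ of a pure-loss (zero-temperature) bosonic channel using a single-mode pure displaced squeezed state with mean photon number $N_S$, a fraction $\xi$ of which is in squeezing and $1-\xi$ in displacement (displacement along the optimal angle); $\xi=0$ corresponds to a coherent state. *)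

theory Defs
  imports Complex_Main
begin

text \<open>Quantum Fisher information I(xi; N_S) for transmission eta of a pure-loss channel,
  displaced squeezed probe with squeezing fraction xi.\<close>
definition QFI :: "real \<Rightarrow> real \<Rightarrow> real \<Rightarrow> real" where
  "QFI \<eta> NS \<xi> = 4 * NS *
     ((1 - \<xi>) / (1 - 2 * \<eta>^2 * (sqrt (\<xi> * NS * (1 + \<xi> * NS)) - \<xi> * NS))
      + \<xi> * ((1 - \<eta>^2)^2 + \<eta>^4) / ((1 - \<eta>^2) * (1 + 2 * \<xi> * NS * \<eta>^2 * (1 - \<eta>^2))))"

end

theory Submission
  imports Defs
begin

text \<open>At \<open>\<xi> = 0\<close> the information is \<open>4 N\<^sub>S\<close>. For small \<open>\<xi> > 0\<close> the displacement term
  \<open>(1 - \<xi>) / (1 - 2 \<eta>\<^sup>2 (\<surd>(\<xi> N\<^sub>S (1 + \<xi> N\<^sub>S)) - \<xi> N\<^sub>S))\<close> exceeds \<open>1\<close>: its numerator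
  loses only \<open>\<xi>\<close>, while its denominator loses about \<open>2 \<eta>\<^sup>2 \<surd>(\<xi> N\<^sub>S)\<close>, which is of
  larger order. The squeezing term is nonnegative, so such a \<open>\<xi>\<close> beats \<open>\<xi> = 0\<close>.\<close>

lemma sqrt_mult_one_plus_minus_lt_half:
  fixes t :: real
  assumes "0 \<le> t"
  shows "sqrt (t * (1 + t)) - t < 1/2"
proof -
  have "sqrt (t * (1 + t)) < sqrt ((t + 1/2)^2)"
    by (rule real_sqrt_less_mono) (simp add: algebra_simps power2_eq_square)
  then show ?thesis
    using assms by simp
qed

lemma QFI_squeezing_denominator_pos:
  fixes \<eta> t :: real
  assumes "\<eta>^2 \<le> 1" and "0 \<le> t"
  shows "0 < 1 - 2 * \<eta>^2 * (sqrt (t * (1 + t)) - t)"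
proof -
  define x where "x = sqrt (t * (1 + t)) - t"
  have "x < 1/2"
    unfolding x_def using assms(2) by (rule sqrt_mult_one_plus_minus_lt_half)
  have "\<eta>^2 * x < 1/2"
  proof (cases "x \<le> 0")
    case True
    then show ?thesis
      using mult_nonneg_nonpos[of "\<eta>^2" x] by simp
  next
    case False
    then have "\<eta>^2 * x \<le> 1 * x"
      using assms(1) by (intro mult_right_mono) auto
    then show ?thesis
      using \<open>x < 1/2\<close> by simp
  qed
  then show ?thesis
    unfolding x_def[symmetric] by simp
qed

lemma QFI_zero: "QFI \<eta> NS 0 = 4 * NS"
  by (simp add: QFI_def)

lemma QFI_gt_QFI_zero:
  fixes \<eta> NS \<xi> :: real
  assumes "0 < \<eta>" and "\<eta> < 1" and "0 < NS" and "0 \<le> \<xi>"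
    and gain: "\<xi> < 2 * \<eta>^2 * (sqrt (\<xi> * NS * (1 + \<xi> * NS)) - \<xi> * NS)"
  shows "QFI \<eta> NS \<xi> > QFI \<eta> NS 0"
proof -
  define D where "D = 1 - 2 * \<eta>^2 * (sqrt (\<xi> * NS * (1 + \<xi> * NS)) - \<xi> * NS)"
  have \<eta>2: "0 < \<eta>^2" "\<eta>^2 < 1"
    using assms(1,2) by (auto simp: power_less_one_iff)
  have "0 < D"
    unfolding D_def using \<eta>2 assms(3,4) by (intro QFI_squeezing_denominator_pos) auto
  moreover have "D < 1 - \<xi>"
    unfolding D_def using gain by linarith
  ultimately have displacement: "1 < (1 - \<xi>) / D"
    by simp
  have "0 \<le> 2 * \<xi> * NS * \<eta>^2 * (1 - \<eta>^2)"
    using assms(3,4) \<eta>2 by simp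
  then have squeezing:
    "0 \<le> \<xi> * ((1 - \<eta>^2)^2 + \<eta>^4) / ((1 - \<eta>^2) * (1 + 2 * \<xi> * NS * \<eta>^2 * (1 - \<eta>^2)))"
    using assms(4) \<eta>2 by (intro divide_nonneg_nonneg mult_nonneg_nonneg) auto
  have "4 * NS < 4 * NS * ((1 - \<xi>) / D
      + \<xi> * ((1 - \<eta>^2)^2 + \<eta>^4) / ((1 - \<eta>^2) * (1 + 2 * \<xi> * NS * \<eta>^2 * (1 - \<eta>^2))))"
    using displacement squeezing assms(3) by simp
  then show ?thesis
    by (simp add: QFI_def QFI_zero D_def)
qed

lemma power2_div_less_squeezing_gain:
  fixes v N c :: real
  assumes "0 < v" and "0 \<le> c" and "v / N < c * (1 - v)"
  shows "v^2 / N < c * (sqrt (v^2 * (1 + v^2)) - v^2)"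
proof -
  have "v * (v / N) < v * (c * (1 - v))"
    using assms(3,1) by (rule mult_strict_left_mono)
  then have "v^2 / N < c * (v - v^2)"
    by (simp add: algebra_simps power2_eq_square)
  also have "\<dots> \<le> c * (sqrt (v^2 * (1 + v^2)) - v^2)"
  proof -
    have "v \<le> sqrt (v^2 * (1 + v^2))"
      using assms(1) by (intro real_le_rsqrt) (simp add: algebra_simps power2_eq_square)
    then show ?thesis
      using assms(2) by (simp add: mult_left_mono)
  qed
  finally show ?thesis .
qed

lemma exists_squeezing_gain:
  fixes \<eta> NS :: real
  assumes "0 < \<eta>" and "\<eta> < 1" and "0 < NS"
  shows "\<exists>\<xi>\<in>{0<..1}. \<xi> < 2 * \<eta>^2 * (sqrt (\<xi> * NS * (1 + \<xi> * NS)) - \<xi> * NS)"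
proof -
  define a where "a = \<eta>^2 * NS"
  have \<eta>2: "0 < \<eta>^2" "\<eta>^2 < 1"
    using assms(1,2) by (auto simp: power_less_one_iff)
  have a: "0 < a" "a < NS"
    unfolding a_def using \<eta>2 assms(3) by auto
  \<comment> \<open>\<open>v = \<surd>(\<xi> N\<^sub>S)\<close> is half the threshold \<open>2 a / (1 + 2 a)\<close>
    below which \<open>v / N\<^sub>S < 2 \<eta>\<^sup>2 (1 - v)\<close>.\<close>
  define v where "v = a / (1 + 2 * a)"
  define \<xi> where "\<xi> = v^2 / NS"
  have "v \<le> a"
    unfolding v_def using a(1) by (simp add: field_simps)
  moreover have "0 < v" "v < 1/2"
    using a(1) by (simp_all add: v_def field_simps)
  ultimately have v: "0 < v" "v < 1/2" "v < NS"
    using a(2) by simp_all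
  have v_gain: "v / NS < 2 * \<eta>^2 * (1 - v)"
  proof -
    have "v / NS = \<eta>^2 / (1 + 2 * a)"
      using assms(3) by (simp add: v_def a_def)
    also have "\<dots> < 2 * \<eta>^2 * (1 + a) / (1 + 2 * a)"
      using a(1) \<eta>2 by (intro divide_strict_right_mono) auto
    also have "\<dots> = 2 * \<eta>^2 * (1 - v)"
      using a(1) by (simp add: v_def field_simps)
    finally show ?thesis .
  qed
  have \<xi>NS: "\<xi> * NS = v^2"
    unfolding \<xi>_def using assms(3) by simp
  have "0 < \<xi>"
    unfolding \<xi>_def using v assms(3) by simp
  moreover have "\<xi> \<le> 1"
  proof -
    have "v^2 \<le> v"
      using v by (simp add: power2_eq_square mult_le_cancel_left1)
    then show ?thesis
      unfolding \<xi>_def using v(3) assms(3) by (simp add: divide_le_eq_1)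
  qed
  moreover have "\<xi> < 2 * \<eta>^2 * (sqrt (\<xi> * NS * (1 + \<xi> * NS)) - \<xi> * NS)"
    unfolding \<xi>NS unfolding \<xi>_def using v(1) \<eta>2(1) v_gain
    by (intro power2_div_less_squeezing_gain) auto
  ultimately show ?thesis
    by auto
qed

theorem proposition2:
  fixes \<eta> NS :: real
  assumes "0 < \<eta>" and "\<eta> < 1" and "0 < NS"
  shows "\<exists>\<xi>\<in>{0..1}. QFI \<eta> NS \<xi> > QFI \<eta> NS 0"
proof -
  obtain \<xi> where "0 < \<xi>" and "\<xi> \<le> 1"
    and "\<xi> < 2 * \<eta>^2 * (sqrt (\<xi> * NS * (1 + \<xi> * NS)) - \<xi> * NS)"
    using exists_squeezing_gain[OF assms] by auto
  then have "QFI \<eta> NS \<xi> > QFI \<eta> NS 0"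
    using QFI_gt_QFI_zero[OF assms] by simp
  with \<open>0 < \<xi>\<close> \<open>\<xi> \<le> 1\<close> show ?thesis
    by auto
qed

end
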